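(* For all terms $s,t$ and $m\in\mathbb N$: $s\Downarrow^m t$ holds if and only if $s\succ^\ast_m t$ and $t$ is an abstraction.
   Context: Terms (de Bruijn): $s::=n\mid st\mid\lambda s$, size $|n|=1+n$, $|\lambda s|=1+|s|$, $|st|=1+|s|+|t|$. Substitution $k^k_u=u$, $n^k_u=n$ ($n\ne k$), $(st)^k_u=(s^k_u)(t^k_u)$, $(\lambda s)^k_u=\lambda(s^{k+1}_u)$. Reduction: $(\lambda s)(\lambda t)\succ s^0_{\lambda t}$; $s\succ s'\Rightarrow st\succ s't$; $t\succ t'\Rightarrow(\lambda s)t\succ(\lambda s)t'$. $s\succ^\ast_m t$ means there is a reduction sequence $s=s_0\succ s_1\succ\cdots\succ s_j=t$ ($j\ge0$) with $\max_{0\le i\le j}|s_i|=m$. The big-step relation $s\Downarrow^m t$ is defined inductively: $\lambda s\Downarrow^{|\lambda s|}\lambda s$; and if $s\Downarrow^{m_1}\lambda s'$, $t\Downarrow^{m_2}\lambda t'$, $s'^0_{\lambda t'}\Downarrow^{m_3}u$ and $m=\max(1+m_1+|t|,\ 1+|\lambda s'|+m_2,\ m_3)$, then $st\Downarrow^m u$. *)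

theory Defs
  imports Main
begin

datatype tm = Var nat | App "tm" "tm" | Lam "tm"

fun tsize :: "tm \<Rightarrow> nat" where
  "tsize (Var n) = 1 + n"
| "tsize (Lam s) = 1 + tsize s"
| "tsize (App s t) = 1 + tsize s + tsize t"

fun subst :: "tm \<Rightarrow> nat \<Rightarrow> tm \<Rightarrow> tm" where
  "subst (Var n) k u = (if n = k then u else Var n)"
| "subst (App s t) k u = App (subst s k u) (subst t k u)"
| "subst (Lam s) k u = Lam (subst s (Suc k) u)"

inductive step :: "tm \<Rightarrow> tm \<Rightarrow> bool" where
  stepBeta: "step (App (Lam s) (Lam t)) (subst s 0 (Lam t))"
| stepAppL: "step s s' \<Longrightarrow> step (App s t) (App s' t)"
| stepAppR: "step t t' \<Longrightarrow> step (App (Lam s) t) (App (Lam s) t')"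

text \<open>s \<succ>*_m t: a reduction sequence s = s_0 \<succ> ... \<succ> s_j = t whose maximal term size is m.\<close>
definition redm :: "tm \<Rightarrow> nat \<Rightarrow> tm \<Rightarrow> bool" where
  "redm s m t \<longleftrightarrow> (\<exists>j f. f 0 = s \<and> f j = t \<and> (\<forall>i<j. step (f i) (f (Suc i)))
                        \<and> Max {tsize (f i) | i. i \<le> j} = m)"

definition is_abs :: "tm \<Rightarrow> bool" where
  "is_abs t \<longleftrightarrow> (\<exists>t'. t = Lam t')"

inductive eval :: "tm \<Rightarrow> nat \<Rightarrow> tm \<Rightarrow> bool" where
  evalLam: "eval (Lam s) (tsize (Lam s)) (Lam s)"
| evalApp: "eval s m1 (Lam s') \<Longrightarrow> eval t m2 (Lam t') \<Longrightarrow> eval (subst s' 0 (Lam t')) m3 u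
    \<Longrightarrow> m = max (1 + m1 + tsize t) (max (1 + tsize (Lam s') + m2) m3)
    \<Longrightarrow> eval (App s t) m u"

end

theory Submission
  imports Defs
begin

text \<open>Prepending one step at a time characterises the maximal size along a reduction sequence
  inductively. An evaluation is replayed as a reduction: first the function part, then the
  argument, then the redex, and the bounds \<open>1 + m1 + |t|\<close> and \<open>1 + |\<lambda>s'| + m2\<close> in \<open>evalApp\<close>
  are exactly the sizes of the terms \<open>App s_i t\<close> and \<open>App (\<lambda>s') t_i\<close> passed through.
  Conversely, evaluation is closed under head expansion, \<open>s \<succ> s'\<close> and \<open>s' \<Down>^m t\<close> giving
  \<open>s \<Down>^(max |s| m) t\<close>, which yields the other direction by induction on the reduction.\<close>

inductive steps_max :: "tm \<Rightarrow> nat \<Rightarrow> tm \<Rightarrow> bool" where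
  steps_max_refl: "steps_max t (tsize t) t"
| steps_max_cons: "step s s' \<Longrightarrow> steps_max s' m t \<Longrightarrow> steps_max s (max (tsize s) m) t"

lemma steps_max_size_le:
  assumes "steps_max s m t"
  shows "tsize s \<le> m" "tsize t \<le> m"
  using assms by (induction rule: steps_max.induct) auto

lemma steps_max_trans:
  "steps_max s m1 t \<Longrightarrow> steps_max t m2 u \<Longrightarrow> steps_max s (max m1 m2) u"
proof (induction arbitrary: m2 u rule: steps_max.induct)
  case (steps_max_refl t)
  then show ?case using steps_max_size_le(1) by (simp add: max_absorb2)
next
  case (steps_max_cons s s' m t)
  then have "steps_max s (max (tsize s) (max m m2)) u"
    by (intro steps_max.steps_max_cons) auto
  then show ?case by (simp add: max.assoc)
qed

lemma steps_max_AppL: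
  "steps_max s m s' \<Longrightarrow> steps_max (App s t) (1 + m + tsize t) (App s' t)"
proof (induction rule: steps_max.induct)
  case (steps_max_refl s)
  show ?case using steps_max.steps_max_refl[of "App s t"] by simp
next
  case (steps_max_cons s s' m s'')
  have "steps_max (App s t) (max (tsize (App s t)) (1 + m + tsize t)) (App s'' t)"
    using stepAppL[OF steps_max_cons.hyps(1)] steps_max_cons.IH by (rule steps_max.steps_max_cons)
  then show ?case by (simp add: max_def split: if_splits)
qed

lemma steps_max_AppR:
  "steps_max t m t' \<Longrightarrow> steps_max (App (Lam s) t) (1 + tsize (Lam s) + m) (App (Lam s) t')"
proof (induction rule: steps_max.induct)
  case (steps_max_refl t)
  show ?case using steps_max.steps_max_refl[of "App (Lam s) t"] by simp
next
  case (steps_max_cons t t' m t'')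
  have "steps_max (App (Lam s) t) (max (tsize (App (Lam s) t)) (1 + tsize (Lam s) + m))
      (App (Lam s) t'')"
    using stepAppR[OF steps_max_cons.hyps(1)] steps_max_cons.IH by (rule steps_max.steps_max_cons)
  then show ?case by (simp add: max_def split: if_splits)
qed

lemma eval_imp_steps_max: "eval s m t \<Longrightarrow> steps_max s m t \<and> is_abs t"
proof (induction rule: eval.induct)
  case (evalLam s)
  show ?case using steps_max_refl[of "Lam s"] by (simp add: is_abs_def)
next
  case (evalApp s m1 s' t m2 t' m3 u m)
  have fun_part: "steps_max (App s t) (1 + m1 + tsize t) (App (Lam s') t)"
    using evalApp.IH(1) steps_max_AppL by blast
  have arg_part: "steps_max (App (Lam s') t) (1 + tsize (Lam s') + m2) (App (Lam s') (Lam t'))"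
    using evalApp.IH(2) steps_max_AppR by blast
  have beta: "steps_max (App (Lam s') (Lam t')) (max (tsize (App (Lam s') (Lam t'))) m3) u"
    using steps_max_cons[OF stepBeta] evalApp.IH(3) by blast
  have "tsize (Lam t') \<le> m2"
    using evalApp.IH(2) steps_max_size_le(2) by blast
  then have "max (1 + m1 + tsize t)
      (max (1 + tsize (Lam s') + m2) (max (tsize (App (Lam s') (Lam t'))) m3)) = m"
    using evalApp.hyps(4) by (simp add: max_def)
  then show ?case
    using steps_max_trans[OF fun_part steps_max_trans[OF arg_part beta]] evalApp.IH(3) by simp
qed

lemma eval_size_le: "eval s m t \<Longrightarrow> tsize s \<le> m"
  using eval_imp_steps_max steps_max_size_le(1) by blast

lemma eval_Lam_iff: "eval (Lam s) m t \<longleftrightarrow> m = tsize (Lam s) \<and> t = Lam s"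
  by (auto elim: eval.cases intro: evalLam simp del: tsize.simps)

lemma eval_head_expansion: "step s s' \<Longrightarrow> eval s' m t \<Longrightarrow> eval s (max (tsize s) m) t"
proof (induction arbitrary: m t rule: step.induct)
  case (stepBeta s t')
  have "eval (App (Lam s) (Lam t')) (max (1 + tsize (Lam s) + tsize (Lam t'))
      (max (1 + tsize (Lam s) + tsize (Lam t')) m)) t"
    by (rule evalApp[OF evalLam evalLam stepBeta.prems]) simp
  then show ?case by simp
next
  case (stepAppL s s' u)
  from stepAppL.prems obtain m1 a m2 b m3 where
    fun_part: "eval s' m1 (Lam a)" and arg_part: "eval u m2 (Lam b)"
    and body: "eval (subst a 0 (Lam b)) m3 t"
    and m: "m = max (1 + m1 + tsize u) (max (1 + tsize (Lam a) + m2) m3)"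
    by (cases rule: eval.cases) auto
  have "eval (App s u) (max (1 + max (tsize s) m1 + tsize u) (max (1 + tsize (Lam a) + m2) m3)) t"
    using stepAppL.IH[OF fun_part] arg_part body by (rule evalApp) simp
  moreover have "max (1 + max (tsize s) m1 + tsize u) (max (1 + tsize (Lam a) + m2) m3)
      = max (tsize (App s u)) m"
    unfolding m by (simp add: max_def)
  ultimately show ?case by simp
next
  case (stepAppR u u' s)
  from stepAppR.prems obtain m2 b m3 where
    arg_part: "eval u' m2 (Lam b)" and body: "eval (subst s 0 (Lam b)) m3 t"
    and m: "m = max (1 + tsize (Lam s) + tsize u') (max (1 + tsize (Lam s) + m2) m3)"
    by (cases rule: eval.cases) (auto simp: eval_Lam_iff)
  have "tsize u' \<le> m2" using arg_part eval_size_le by blast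
  have "eval (App (Lam s) u) (max (1 + tsize (Lam s) + tsize u)
      (max (1 + tsize (Lam s) + max (tsize u) m2) m3)) t"
    using evalLam stepAppR.IH[OF arg_part] body by (rule evalApp) simp
  moreover have "max (1 + tsize (Lam s) + tsize u) (max (1 + tsize (Lam s) + max (tsize u) m2) m3)
      = max (tsize (App (Lam s) u)) m"
    unfolding m using \<open>tsize u' \<le> m2\<close> by (simp add: max_def)
  ultimately show ?case by simp
qed

lemma steps_max_imp_eval: "steps_max s m t \<Longrightarrow> is_abs t \<Longrightarrow> eval s m t"
  by (induction rule: steps_max.induct) (auto simp: is_abs_def intro: evalLam eval_head_expansion)

lemma Max_image_atMost_Suc:
  fixes g :: "nat \<Rightarrow> 'a::linorder"
  shows "Max {g i | i. i \<le> Suc j} = max (g 0) (Max {g (Suc i) | i. i \<le> j})"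
proof -
  have "{g i | i. i \<le> Suc j} = g ` {..Suc j}" "{g (Suc i) | i. i \<le> j} = g ` Suc ` {..j}"
    by auto
  then show ?thesis by (simp add: atMost_Suc_eq_insert_0)
qed

lemma step_chain_imp_steps_max:
  "\<forall>i<j. step (f i) (f (Suc i)) \<Longrightarrow> steps_max (f 0) (Max {tsize (f i) | i. i \<le> j}) (f j)"
proof (induction j arbitrary: f)
  case 0
  show ?case using steps_max_refl[of "f 0"] by simp
next
  case (Suc j)
  have "steps_max (f 1) (Max {tsize (f (Suc i)) | i. i \<le> j}) (f (Suc j))"
    using Suc.IH[of "f \<circ> Suc"] Suc.prems by simp
  then have "steps_max (f 0) (max (tsize (f 0)) (Max {tsize (f (Suc i)) | i. i \<le> j})) (f (Suc j))"
    using Suc.prems by (intro steps_max_cons[of _ "f 1"]) simp_all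
  then show ?case by (simp only: Max_image_atMost_Suc)
qed

lemma steps_max_imp_redm: "steps_max s m t \<Longrightarrow> redm s m t"
proof (induction rule: steps_max.induct)
  case (steps_max_refl t)
  show ?case unfolding redm_def by (rule exI[of _ 0], rule exI[of _ "\<lambda>_. t"]) simp
next
  case (steps_max_cons s s' m t)
  then obtain j f where f: "f 0 = s'" "f j = t" "\<forall>i<j. step (f i) (f (Suc i))"
    "Max {tsize (f i) | i. i \<le> j} = m"
    unfolding redm_def by blast
  define g where "g i = (case i of 0 \<Rightarrow> s | Suc k \<Rightarrow> f k)" for i
  have "\<forall>i<Suc j. step (g i) (g (Suc i))"
    using f(1,3) steps_max_cons.hyps(1) by (auto simp: g_def less_Suc_eq_0_disj)
  moreover have "Max {tsize (g i) | i. i \<le> Suc j} = max (tsize s) m"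
    by (simp only: Max_image_atMost_Suc) (simp add: g_def f(4))
  ultimately show ?case
    unfolding redm_def using f(2) by (intro exI[of _ "Suc j"] exI[of _ g]) (simp add: g_def)
qed

lemma redm_iff_steps_max: "redm s m t \<longleftrightarrow> steps_max s m t"
proof
  assume "redm s m t"
  then obtain j f where "f 0 = s" "f j = t" "\<forall>i<j. step (f i) (f (Suc i))"
    "Max {tsize (f i) | i. i \<le> j} = m"
    unfolding redm_def by blast
  then show "steps_max s m t" using step_chain_imp_steps_max by blast
qed (rule steps_max_imp_redm)

theorem lemmaA4:
  fixes s t :: "tm" and m :: nat
  shows "eval s m t \<longleftrightarrow> redm s m t \<and> is_abs t"
  using eval_imp_steps_max steps_max_imp_eval unfolding redm_iff_steps_max by blast

end
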